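(* Let $N\ge3$ be odd, $K=\tilde F(N)$, and let $\mathcal{F}$ be a $K\times N$ circular Florentine rectangle over $\mathbb{Z}_N$ with rows $\pi_0,\dots,\pi_{K-1}$; put $g_{i,j}=\pi_i^{-1}(j)$. Let $T\ge1$, $P=N+T$, $L=NP$, $\mathcal{I}\subseteq\mathbb{Z}_P$ with $|\mathcal{I}|=T$, and $\mathbb{Z}_P\setminus\mathcal{I}=\{l_0<\dots<l_{N-1}\}$. Let $\mathcal{H}=(h_{c,s})_{0\le c,s<N}$ be a complex matrix with $|h_{c,s}|=1$ for all $c,s$ and $\sum_{s=0}^{N-1}h_{c_0,s}h^*_{c_1,s}=0$ for $c_0\ne c_1$ (e.g. the unnormalized DFT matrix). For $0\le i<K$, $0\le c<N$, define the $N\times P$ matrix $\mathcal{D}^i_c=(d^{i,c}_{j,k})$ by $d^{i,c}_{j,k}=\sqrt{P/N}\,\omega_N^{j g_{i,t}}h_{c,t}$ if $k=l_t$, and $d^{i,c}_{j,k}=0$ if $k\in\mathcal{I}$; let $\hat u^{i,c}_n=d^{i,c}_{r,s}$ with $r=\lfloor n/P\rfloor$, $s=n-Pr$ ($0\le n<L$), let $U^{i,c}$ be the time-domain sequence $u^{i,c}_t=\frac{1}{\sqrt L}\sum_{n=0}^{L-1}\hat u^{i,c}_n\omega_L^{nt}$, and let $\mathcal{U}^i=\{U^{i,c}:0\le c<N\}$. Then: (0) every $U^{i,c}$ is unimodular; (1) with $\Omega=\{s+aP:s\in\mathcal{I},a\in\mathbb{Z}_N\}$, $\hat u^{i,c}_n=0$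 for $n\in\Omega$ and $|\hat u^{i,c}_n|=\sqrt{P/N}$ for $n\notin\Omega$; (2) each $\mathcal{U}^i$ is an $(N,NP,N)$-ZCZ sequence set, i.e. $\theta_{U^{i,c}}(\tau)=0$ for $0<\tau<N$ and $\theta_{U^{i,c_0},U^{i,c_1}}(\tau)=0$ for $c_0\ne c_1$ and $0\le\tau<N$; in particular $NP-|\Omega|=N^2=MZ$ with $M=Z=N$; (3) $|\theta_{U^{i,c_0},U^{i',c_1}}(\tau)|=P=\frac{NP}{\sqrt{NP-|\Omega|}}$ for all $0\le i\ne i'<K$, all $0\le c_0,c_1<N$ and all $0\le\tau<L$.
   Context: $\omega_n=e^{2\pi\sqrt{-1}/n}$. An $M\times N$ circular Florentine rectangle (CFR) over $\mathbb{Z}_N$ is an $M\times N$ array whose rows $\pi_i:\mathbb{Z}_N\to\mathbb{Z}_N$ are permutations such that for every $m\in\mathbb{Z}_N\setminus\{0\}$ and all $i,j,x,y$: $(\pi_i(x),\pi_i(x+m))=(\pi_j(y),\pi_j(y+m))$ (indices mod $N$) iff $i=j$ and $x=y$. $\tilde F(N)$ is the largest $M$ for which an $M\times N$ CFR exists (for odd $N\ge3$, $\tilde F(N)\ge2$). $\pi_i^{-1}$ is the inverse permutation with values in $\{0,\dots,N-1\}$. Periodic correlation: $\theta_{C,D}(\tau)=\sum_{t=0}^{L-1}c_td^*_{\langle t+\tau\rangle_L}$, $\theta_C=\theta_{C,C}$. An $(M,L,Z)$-ZCZ set is a set of $M$ length-$L$ sequences whose autocorrelations vanish for $0<\tau<Z$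 and whose pairwise cross-correlations vanish for $0\le\tau<Z$. *)

theory Defs
  imports Complex_Main
begin

definition omega :: "nat \<Rightarrow> complex" where
  "omega n = cis (2 * pi / real n)"

definition pcorr :: "nat \<Rightarrow> (nat \<Rightarrow> complex) \<Rightarrow> (nat \<Rightarrow> complex) \<Rightarrow> nat \<Rightarrow> complex" where
  "pcorr L c d \<tau> = (\<Sum>t<L. c t * cnj (d ((t + \<tau>) mod L)))"

definition is_CFR :: "nat \<Rightarrow> nat \<Rightarrow> (nat \<Rightarrow> nat \<Rightarrow> nat) \<Rightarrow> bool" where
  "is_CFR M N \<pi> \<longleftrightarrow>
     (\<forall>i<M. bij_betw (\<pi> i) {..<N} {..<N}) \<and>
     (\<forall>m\<in>{1..<N}. \<forall>i<M. \<forall>j<M. \<forall>x<N. \<forall>y<N.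
        ((\<pi> i x, \<pi> i ((x + m) mod N)) = (\<pi> j y, \<pi> j ((y + m) mod N)))
          \<longleftrightarrow> (i = j \<and> x = y))"

definition Ftilde :: "nat \<Rightarrow> nat" where
  "Ftilde N = (GREATEST M. \<exists>\<pi>. is_CFR M N \<pi>)"

definition cfr_g :: "nat \<Rightarrow> (nat \<Rightarrow> nat \<Rightarrow> nat) \<Rightarrow> nat \<Rightarrow> nat \<Rightarrow> nat" where
  "cfr_g N \<pi> i j = inv_into {..<N} (\<pi> i) j"

definition lpos :: "nat \<Rightarrow> nat set \<Rightarrow> nat \<Rightarrow> nat" where
  "lpos P I t = sorted_list_of_set ({..<P} - I) ! t"

definition dent :: "nat \<Rightarrow> nat \<Rightarrow> nat set \<Rightarrow> (nat \<Rightarrow> nat \<Rightarrow> complex) \<Rightarrow> (nat \<Rightarrow> nat \<Rightarrow> nat)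
    \<Rightarrow> nat \<Rightarrow> nat \<Rightarrow> nat \<Rightarrow> nat \<Rightarrow> complex" where
  "dent N T I H \<pi> i c j k =
     (if k \<in> I then 0
      else (let P = N + T; t = (THE t. t < N \<and> lpos P I t = k) in
            complex_of_real (sqrt (real P / real N)) * omega N ^ (j * cfr_g N \<pi> i t) * H c t))"

definition uhat :: "nat \<Rightarrow> nat \<Rightarrow> nat set \<Rightarrow> (nat \<Rightarrow> nat \<Rightarrow> complex) \<Rightarrow> (nat \<Rightarrow> nat \<Rightarrow> nat)
    \<Rightarrow> nat \<Rightarrow> nat \<Rightarrow> nat \<Rightarrow> complex" where
  "uhat N T I H \<pi> i c n = dent N T I H \<pi> i c (n div (N + T)) (n mod (N + T))"

definition useq :: "nat \<Rightarrow> nat \<Rightarrow> nat set \<Rightarrow> (nat \<Rightarrow> nat \<Rightarrow> complex) \<Rightarrow> (nat \<Rightarrow> nat \<Rightarrow> nat)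
    \<Rightarrow> nat \<Rightarrow> nat \<Rightarrow> nat \<Rightarrow> complex" where
  "useq N T I H \<pi> i c t =
     (let L = N * (N + T) in
      complex_of_real (1 / sqrt (real L)) * (\<Sum>n<L. uhat N T I H \<pi> i c n * omega L ^ (n * t)))"

definition is_ZCZ :: "nat \<Rightarrow> nat \<Rightarrow> nat \<Rightarrow> (nat \<Rightarrow> nat \<Rightarrow> complex) \<Rightarrow> bool" where
  "is_ZCZ M L Z U \<longleftrightarrow>
     (\<forall>c<M. \<forall>\<tau>. 0 < \<tau> \<and> \<tau> < Z \<longrightarrow> pcorr L (U c) (U c) \<tau> = 0) \<and>
     (\<forall>c0<M. \<forall>c1<M. c0 \<noteq> c1 \<longrightarrow> (\<forall>\<tau><Z. pcorr L (U c0) (U c1) \<tau> = 0))"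

end

(* Unfolding the inverse DFT, the sum over the row index of D^i_c is a geometric sum of N-th roots
   of unity that keeps a single column, so u^{i,c}_t = h_{c,s} omega_L^(l_s t) with
   s = pi_i(-t mod N): every U^{i,c} is unimodular. In a periodic correlation the sum over the
   P blocks of length N is again a geometric sum, now of P-th roots of unity, and vanishes unless
   the columns active at times b and b + tau coincide. Within one row this never happens for
   0 < tau < N, and for tau = 0 what remains is the orthogonality of the rows of H. For two
   distinct rows of a circular Florentine rectangle, x |-> pi_i'^-1(pi_i x) - x is a permutation
   of Z_N, so in every period exactly one time gives a coincidence, and the correlation is a
   single term of modulus P. *)

theory Submission
  imports Defs "HOL-Number_Theory.Cong"
begin

lemma omega_pow: "omega n ^ k = cis (2 * pi * real k / real n)"
  unfolding omega_def DeMoivre by (simp add: mult.commute)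

lemma norm_omega_pow [simp]: "norm (omega n ^ k) = 1"
  by (simp add: omega_pow)

lemma omega_neq_0 [simp]: "omega n \<noteq> 0"
  by (simp add: omega_def)

lemma omega_pow_self: "0 < n \<Longrightarrow> omega n ^ n = 1"
  by (simp add: omega_pow)

lemma omega_mult_pow: "0 < a \<Longrightarrow> omega (a * b) ^ a = omega b"
  unfolding omega_pow by (simp add: omega_def)

lemma omega_pow_eq_1_iff:
  assumes "0 < n"
  shows "omega n ^ k = 1 \<longleftrightarrow> n dvd k"
proof
  assume "omega n ^ k = 1"
  then have "cos (2 * pi * real k / real n) = 1"
    by (simp add: omega_pow complex_eq_iff)
  then obtain m :: int where "2 * pi * real k / real n = m * 2 * pi"
    by (auto simp: cos_one_2pi_int)
  then have "real k = real_of_int m * real n"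
    using assms by (simp add: field_simps)
  then have "int k = m * int n"
    by (metis of_int_eq_iff of_int_mult of_int_of_nat_eq)
  then show "n dvd k"
    by (metis dvd_triv_right of_nat_dvd_iff)
next
  assume "n dvd k"
  then obtain m where "k = n * m"
    by blast
  then have "2 * pi * real k / real n = 2 * pi * real m"
    using assms by simp
  then show "omega n ^ k = 1"
    by (simp add: omega_pow)
qed

lemma omega_pow_eq_iff:
  assumes "0 < n"
  shows "omega n ^ j = omega n ^ k \<longleftrightarrow> [j = k] (mod n)"
proof -
  have ordered: "omega n ^ j = omega n ^ k \<longleftrightarrow> [j = k] (mod n)" if "k \<le> j" for j k
  proof -
    have "omega n ^ j = omega n ^ k * omega n ^ (j - k)"
      using that by (simp flip: power_add)
    then show ?thesis
      using that by (simp add: omega_pow_eq_1_iff[OF assms] cong_altdef_nat)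
  qed
  show ?thesis
    using ordered[of k j] ordered[of j k] cong_sym_eq[of j k n] by (cases "k \<le> j") auto
qed

lemma omega_pow_mod: "omega n ^ (k mod n) = omega n ^ k"
  by (cases "n = 0") (simp_all add: omega_pow_eq_iff)

lemma omega_pow_mult_cnj_self [simp]: "omega n ^ k * cnj (omega n ^ k) = 1"
  by (metis complex_norm_square norm_omega_pow of_real_1 power_one)

lemma omega_pow_mult_cnj_add: "omega n ^ j * cnj (omega n ^ (j + k)) = cnj (omega n ^ k)"
  by (simp only: power_add complex_cnj_mult mult.assoc[symmetric] omega_pow_mult_cnj_self mult_1)

lemma omega_pow_mult_add:
  assumes "n = q * k" and "0 < k"
  shows "omega n ^ ((a * k + b) * x) = omega q ^ (a * x) * omega n ^ (b * x)"
proof -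
  have "omega n ^ k = omega q"
    using assms omega_mult_pow[of k q] by (simp add: mult.commute)
  moreover have "(a * k + b) * x = k * (a * x) + b * x"
    by (simp add: algebra_simps)
  ultimately show ?thesis
    by (simp only: power_add power_mult)
qed

lemma sum_omega_pow_mult_cnj:
  assumes "0 < n"
  shows "(\<Sum>a<n. omega n ^ (a * j) * cnj (omega n ^ (a * k)))
    = (if [j = k] (mod n) then of_nat n else 0)"
proof -
  define z where "z = omega n ^ j * cnj (omega n ^ k)"
  have summand: "omega n ^ (a * j) * cnj (omega n ^ (a * k)) = z ^ a" for a
    unfolding z_def
    by (simp only: power_mult_distrib complex_cnj_power flip: power_mult) (simp add: mult.commute)
  note unit = omega_pow_mult_cnj_self[of n k]
  have "z = 1 \<longleftrightarrow> omega n ^ j = omega n ^ k"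
  proof
    assume "z = 1"
    then have "omega n ^ j * cnj (omega n ^ k) = omega n ^ k * cnj (omega n ^ k)"
      unfolding z_def unit .
    moreover have "cnj (omega n ^ k) \<noteq> 0"
      using unit by fastforce
    ultimately show "omega n ^ j = omega n ^ k"
      by simp
  next
    assume "omega n ^ j = omega n ^ k"
    then show "z = 1"
      unfolding z_def by (simp only: unit)
  qed
  moreover have "z ^ n = 1"
  proof -
    have "z ^ n = (omega n ^ n) ^ j * cnj ((omega n ^ n) ^ k)"
      unfolding z_def
      by (simp only: power_mult_distrib complex_cnj_power flip: power_mult) (simp add: mult.commute)
    then show ?thesis
      by (simp add: omega_pow_self[OF assms])
  qed
  ultimately show ?thesis
    unfolding summand by (cases "z = 1") (simp_all add: geometric_sum omega_pow_eq_iff[OF assms])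
qed

lemma sum_omega_pow_mult:
  "0 < n \<Longrightarrow> (\<Sum>a<n. omega n ^ (a * k)) = (if n dvd k then of_nat n else 0)"
  using sum_omega_pow_mult_cnj[of n k 0] by (simp add: cong_0_iff)

lemma sum_lessThan_mult:
  fixes f :: "nat \<Rightarrow> 'a::comm_monoid_add"
  shows "(\<Sum>n<m * k. f n) = (\<Sum>a<m. \<Sum>b<k. f (a * k + b))"
proof -
  have "(\<Sum>n<m * k. f n) = (\<Sum>a<m. sum f {a * k..<a * k + k})"
    by (simp add: sum.nat_group)
  also have "\<dots> = (\<Sum>a<m. \<Sum>b<k. f (a * k + b))"
    by (simp add: sum.shift_bounds_nat_ivl[of f 0 _ k, simplified] atLeast0LessThan add.commute)
  finally show ?thesis .
qed

lemma pcorr_periodic: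
  "(\<And>t. V (t mod L) = V t) \<Longrightarrow> pcorr L U V \<tau> = (\<Sum>t<L. U t * cnj (V (t + \<tau>)))"
  by (simp add: pcorr_def)

definition neg_mod :: "nat \<Rightarrow> nat \<Rightarrow> nat" where
  "neg_mod n t = (n - t mod n) mod n"

lemma neg_mod_less: "0 < n \<Longrightarrow> neg_mod n t < n"
  by (simp add: neg_mod_def)

lemma cong_neg_mod_add:
  assumes "0 < n"
  shows "[neg_mod n t + t = 0] (mod n)"
proof -
  have "[neg_mod n t + t = (n - t mod n) + t mod n] (mod n)"
    unfolding neg_mod_def by (intro cong_add) (simp_all add: cong_def)
  also have "(n - t mod n) + t mod n = n"
    using assms by simp
  finally show ?thesis
    by (simp add: cong_def)
qed

lemma cong_add_eq_0_iff_neg_mod: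
  assumes "0 < n" and "g < n"
  shows "[g + t = 0] (mod n) \<longleftrightarrow> g = neg_mod n t"
proof
  assume "[g + t = 0] (mod n)"
  then have "[g + t = neg_mod n t + t] (mod n)"
    using cong_neg_mod_add[OF assms(1)] cong_sym cong_trans by blast
  then show "g = neg_mod n t"
    using assms neg_mod_less[OF assms(1)]
    by (auto simp: cong_add_rcancel_nat intro: cong_less_modulus_unique_nat)
qed (simp add: cong_neg_mod_add[OF assms(1)])

lemma neg_mod_eq_iff:
  assumes "0 < n"
  shows "neg_mod n s = neg_mod n t \<longleftrightarrow> [s = t] (mod n)"
proof
  assume eq: "neg_mod n s = neg_mod n t"
  have "[neg_mod n s + s = neg_mod n s + t] (mod n)"
    using cong_neg_mod_add[OF assms, of s] cong_neg_mod_add[OF assms, of t] eq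
    by (metis cong_sym cong_trans)
  then show "[s = t] (mod n)"
    by (simp add: cong_add_lcancel_nat)
qed (simp add: neg_mod_def cong_def)

lemma bij_betw_neg_mod:
  assumes "0 < n"
  shows "bij_betw (neg_mod n) {..<n} {..<n}"
proof -
  have "inj_on (neg_mod n) {..<n}"
    by (rule inj_onI) (auto simp: neg_mod_eq_iff[OF assms] intro: cong_less_modulus_unique_nat)
  moreover have "neg_mod n ` {..<n} \<subseteq> {..<n}"
    using neg_mod_less[OF assms] by auto
  ultimately show ?thesis
    by (simp add: bij_betw_def endo_inj_surj)
qed

lemma cfr_g_less:
  "bij_betw (\<pi> i) {..<N} {..<N} \<Longrightarrow> t < N \<Longrightarrow> cfr_g N \<pi> i t < N"
  unfolding cfr_g_def by (metis bij_betw_def inv_into_into lessThan_iff)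

lemma cfr_g_eq_iff:
  assumes "bij_betw (\<pi> i) {..<N} {..<N}" and "t < N" and "x < N"
  shows "cfr_g N \<pi> i t = x \<longleftrightarrow> \<pi> i x = t"
  using assms unfolding cfr_g_def
  by (metis bij_betw_inv_into_left bij_betw_inv_into_right lessThan_iff)

lemma pi_cfr_g:
  "bij_betw (\<pi> i) {..<N} {..<N} \<Longrightarrow> t < N \<Longrightarrow> \<pi> i (cfr_g N \<pi> i t) = t"
  using cfr_g_eq_iff cfr_g_less by blast

lemma is_CFR_row_bij: "is_CFR K N \<pi> \<Longrightarrow> i < K \<Longrightarrow> bij_betw (\<pi> i) {..<N} {..<N}"
  by (simp add: is_CFR_def)

(* Injectivity of x |-> g(pi_i x) - x mod N, with g = pi_i'^-1 and the subtraction moved across: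
   a collision at shift m = y - x would make the pairs (pi_i x, pi_i (x + m)) and
   (pi_i' x', pi_i' (x' + m)) equal for x' = g (pi_i x). *)
lemma is_CFR_orthomorphism:
  assumes cfr: "is_CFR K N \<pi>" and rows: "i < K" "i' < K" "i \<noteq> i'" and xy: "x < N" "y < N"
    and cong: "[cfr_g N \<pi> i' (\<pi> i x) + y = cfr_g N \<pi> i' (\<pi> i y) + x] (mod N)"
  shows "x = y"
proof (rule ccontr)
  assume "x \<noteq> y"
  let ?g = "cfr_g N \<pi> i'"
  have bij: "bij_betw (\<pi> i) {..<N} {..<N}" "bij_betw (\<pi> i') {..<N} {..<N}"
    using cfr rows by (simp_all add: is_CFR_row_bij)
  define m where "m = (y + N - x) mod N"
  have "x + (y + N - x) = y + N"
    using xy by simp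
  then have shift: "[x + m = y] (mod N)"
    unfolding m_def cong_def by (metis mod_add_right_eq mod_add_self2)
  have "m \<noteq> 0"
    using \<open>x \<noteq> y\<close> shift xy by (auto intro: cong_less_modulus_unique_nat)
  then have "m \<in> {1..<N}"
    using xy by (simp add: m_def)
  have "[?g (\<pi> i x) + m + x = ?g (\<pi> i y) + x] (mod N)"
    using cong_add[OF cong_refl shift, of "?g (\<pi> i x)"] cong by (simp add: ac_simps cong_trans)
  then have "[?g (\<pi> i x) + m = ?g (\<pi> i y)] (mod N)"
    by (simp add: cong_add_rcancel_nat)
  moreover have "\<pi> i x < N" "\<pi> i y < N"
    using xy bij(1) by (auto simp: bij_betw_def)
  moreover have "?g (\<pi> i x) < N" "?g (\<pi> i y) < N"
    using calculation(2,3) cfr_g_less[of \<pi> i', OF bij(2)] by blast+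
  ultimately have "(\<pi> i x, \<pi> i ((x + m) mod N))
      = (\<pi> i' (?g (\<pi> i x)), \<pi> i' ((?g (\<pi> i x) + m) mod N))"
    using shift xy pi_cfr_g[of \<pi> i', OF bij(2)] by (simp add: cong_def)
  then show False
    using cfr \<open>m \<in> {1..<N}\<close> rows xy \<open>?g (\<pi> i x) < N\<close> unfolding is_CFR_def by blast
qed

lemma is_CFR_inj_on_offset:
  assumes cfr: "is_CFR K N \<pi>" and rows: "i < K" "i' < K" "i \<noteq> i'" and "0 < N"
  shows "inj_on (\<lambda>b. (cfr_g N \<pi> i' (\<pi> i (neg_mod N b)) + b) mod N) {..<N}"
proof (rule inj_onI)
  let ?g = "\<lambda>b. cfr_g N \<pi> i' (\<pi> i (neg_mod N b))"
  fix b1 b2 assume b: "b1 \<in> {..<N}" "b2 \<in> {..<N}" and "(?g b1 + b1) mod N = (?g b2 + b2) mod N"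
  then have offset: "[?g b1 + b1 = ?g b2 + b2] (mod N)"
    by (simp only: cong_def)
  let ?x1 = "neg_mod N b1" and ?x2 = "neg_mod N b2"
  have "[?g b1 + ?x2 = ?g b1 + ?x2 + (?x1 + b1)] (mod N)"
    using cong_add[OF cong_refl cong_sym[OF cong_neg_mod_add[OF \<open>0 < N\<close>]]] by simp
  also have "?g b1 + ?x2 + (?x1 + b1) = (?g b1 + b1) + (?x1 + ?x2)"
    by simp
  also have "[\<dots> = (?g b2 + b2) + (?x1 + ?x2)] (mod N)"
    using offset by (rule cong_add[OF _ cong_refl])
  also have "(?g b2 + b2) + (?x1 + ?x2) = ?g b2 + ?x1 + (?x2 + b2)"
    by simp
  also have "[\<dots> = ?g b2 + ?x1] (mod N)"
    using cong_add[OF cong_refl cong_neg_mod_add[OF \<open>0 < N\<close>]] by simp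
  finally have "?x1 = ?x2"
    using is_CFR_orthomorphism[OF cfr rows] neg_mod_less[OF \<open>0 < N\<close>] by blast
  then show "b1 = b2"
    using b by (auto simp: neg_mod_eq_iff[OF \<open>0 < N\<close>] intro: cong_less_modulus_unique_nat)
qed

lemma is_CFR_unique_coincidence:
  assumes cfr: "is_CFR K N \<pi>" and rows: "i < K" "i' < K" "i \<noteq> i'" and "0 < N"
  shows "\<exists>b0<N. \<forall>b<N. \<pi> i (neg_mod N b) = \<pi> i' (neg_mod N (b + \<tau>)) \<longleftrightarrow> b = b0"
proof -
  let ?g = "\<lambda>b. cfr_g N \<pi> i' (\<pi> i (neg_mod N b))"
  define D where "D b = (?g b + b) mod N" for b
  have bij: "bij_betw (\<pi> i) {..<N} {..<N}" "bij_betw (\<pi> i') {..<N} {..<N}"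
    using cfr rows by (simp_all add: is_CFR_row_bij)
  have pi_less: "\<pi> i (neg_mod N b) < N" for b
    using bij(1) neg_mod_less[OF \<open>0 < N\<close>] by (auto simp: bij_betw_def)
  have coincidence_iff:
    "\<pi> i (neg_mod N b) = \<pi> i' (neg_mod N (b + \<tau>)) \<longleftrightarrow> D b = neg_mod N \<tau>" for b
  proof -
    have "\<pi> i (neg_mod N b) = \<pi> i' (neg_mod N (b + \<tau>)) \<longleftrightarrow> ?g b = neg_mod N (b + \<tau>)"
      using cfr_g_eq_iff[of \<pi> i', OF bij(2) pi_less neg_mod_less[OF \<open>0 < N\<close>]] by auto
    also have "\<dots> \<longleftrightarrow> [?g b + (b + \<tau>) = 0] (mod N)"
      using cong_add_eq_0_iff_neg_mod[OF \<open>0 < N\<close> cfr_g_less[of \<pi> i', OF bij(2) pi_less]]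
      by blast
    also have "\<dots> \<longleftrightarrow> [D b + \<tau> = 0] (mod N)"
      unfolding D_def cong_def by (simp add: mod_add_left_eq add.assoc)
    also have "\<dots> \<longleftrightarrow> D b = neg_mod N \<tau>"
      using cong_add_eq_0_iff_neg_mod[OF \<open>0 < N\<close>] \<open>0 < N\<close> by (simp add: D_def)
    finally show ?thesis .
  qed
  have "inj_on D {..<N}"
    unfolding D_def using is_CFR_inj_on_offset[OF cfr rows \<open>0 < N\<close>] .
  moreover have "D ` {..<N} \<subseteq> {..<N}"
    using \<open>0 < N\<close> by (auto simp: D_def)
  ultimately have "D ` {..<N} = {..<N}"
    by (simp add: endo_inj_surj)
  then obtain b0 where "b0 < N" "D b0 = neg_mod N \<tau>"
    using neg_mod_less[OF \<open>0 < N\<close>] by (metis imageE lessThan_iff)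
  then show ?thesis
    using coincidence_iff \<open>inj_on D {..<N}\<close> by (metis inj_onD lessThan_iff)
qed

locale zcz_construction =
  fixes N T :: nat and I :: "nat set" and H :: "nat \<Rightarrow> nat \<Rightarrow> complex"
    and \<pi> :: "nat \<Rightarrow> nat \<Rightarrow> nat"
  assumes N_pos: "0 < N" and I_subset: "I \<subseteq> {..<N + T}" and card_I: "card I = T"
begin

abbreviation "P \<equiv> N + T"
abbreviation "L \<equiv> N * (N + T)"
abbreviation "l \<equiv> lpos (N + T) I"
abbreviation "U \<equiv> useq N T I H \<pi>"

definition tone :: "nat \<Rightarrow> nat \<Rightarrow> nat" where
  "tone i t = \<pi> i (neg_mod N t)"

lemma card_complement: "card ({..<P} - I) = N"
  using I_subset card_I by (simp add: card_Diff_subset finite_subset)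

lemma bij_betw_lpos: "bij_betw l {..<N} ({..<P} - I)"
proof -
  let ?xs = "sorted_list_of_set ({..<P} - I)"
  have "bij_betw (nth ?xs) {..<length ?xs} (set ?xs)"
    by (simp add: bij_betw_nth)
  then show ?thesis
    using card_complement by (simp add: lpos_def [abs_def])
qed

lemma lpos_less: "t < N \<Longrightarrow> l t < P"
  using bij_betw_apply[OF bij_betw_lpos] by auto

lemma cong_lpos_iff: "t < N \<Longrightarrow> t' < N \<Longrightarrow> [l t = l t'] (mod P) \<longleftrightarrow> t = t'"
  using bij_betw_lpos lpos_less by (auto simp: cong_def bij_betw_def inj_on_def)

lemma dent_lpos:
  assumes "t < N"
  shows "dent N T I H \<pi> i c j (l t)
    = complex_of_real (sqrt (real P / real N)) * omega N ^ (j * cfr_g N \<pi> i t) * H c t"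
proof -
  have "l t \<notin> I" and "(THE t'. t' < N \<and> l t' = l t) = t"
    using bij_betw_lpos assms by (auto simp: bij_betw_def inj_on_def)
  then show ?thesis
    by (simp add: dent_def)
qed

lemma sum_lessThan_P_lpos:
  "(\<And>s. s \<in> I \<Longrightarrow> f s = 0) \<Longrightarrow> (\<Sum>s<P. f s) = (\<Sum>t<N. f (l t))"
  by (simp add: sum.mono_neutral_right[of "{..<P}" "{..<P} - I"] sum.reindex_bij_betw[OF bij_betw_lpos])

lemma uhat_mult_add: "s < P \<Longrightarrow> uhat N T I H \<pi> i c (r * P + s) = dent N T I H \<pi> i c r s"
  using N_pos by (simp add: uhat_def add.commute[of "r * P" s])

lemma useq_scaling: "1 / sqrt (real L) * (sqrt (real P / real N) * real N) = 1"
proof -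
  define a b where "a = sqrt (real N)" and "b = sqrt (real P)"
  have "0 < a" "0 < b"
    using N_pos by (simp_all add: a_def b_def)
  moreover have "sqrt (real L) = a * b" "sqrt (real P / real N) = b / a" "real N = a * a"
    by (simp_all add: a_def b_def real_sqrt_mult real_sqrt_divide)
  ultimately show ?thesis
    by (simp add: field_simps)
qed

lemma tone_less: "bij_betw (\<pi> i) {..<N} {..<N} \<Longrightarrow> tone i t < N"
  using neg_mod_less[OF N_pos] by (auto simp: tone_def bij_betw_def)

lemma sum_uhat_omega_pow:
  assumes bij: "bij_betw (\<pi> i) {..<N} {..<N}"
  shows "(\<Sum>n<L. uhat N T I H \<pi> i c n * omega L ^ (n * t))
    = complex_of_real (sqrt (real P / real N) * real N) * H c (tone i t) * omega L ^ (l (tone i t) * t)"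
proof -
  let ?d = "complex_of_real (sqrt (real P / real N))"
  let ?X = "\<lambda>k. ?d * H c k * omega L ^ (l k * t)"
  have twiddle: "omega N ^ (r * g) * omega L ^ ((r * P + m) * t)
      = omega L ^ (m * t) * omega N ^ (r * (g + t))" for r g m
    using omega_pow_mult_add[of L N P r m t] N_pos by (simp add: add_mult_distrib2 power_add mult_ac)
  have "(\<Sum>n<L. uhat N T I H \<pi> i c n * omega L ^ (n * t))
      = (\<Sum>r<N. \<Sum>k<N. dent N T I H \<pi> i c r (l k) * omega L ^ ((r * P + l k) * t))"
    by (simp add: sum_lessThan_mult uhat_mult_add sum_lessThan_P_lpos dent_def)
  also have "\<dots> = (\<Sum>r<N. \<Sum>k<N. ?X k * omega N ^ (r * (cfr_g N \<pi> i k + t)))"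
  proof (intro sum.cong refl)
    fix r k assume "k \<in> {..<N}"
    then have "dent N T I H \<pi> i c r (l k) * omega L ^ ((r * P + l k) * t)
        = ?d * H c k * (omega N ^ (r * cfr_g N \<pi> i k) * omega L ^ ((r * P + l k) * t))"
      by (simp add: dent_lpos mult_ac)
    then show "dent N T I H \<pi> i c r (l k) * omega L ^ ((r * P + l k) * t)
        = ?X k * omega N ^ (r * (cfr_g N \<pi> i k + t))"
      unfolding twiddle by (simp add: mult_ac)
  qed
  also have "\<dots> = (\<Sum>k<N. ?X k * (\<Sum>r<N. omega N ^ (r * (cfr_g N \<pi> i k + t))))"
    by (subst sum.swap) (simp add: sum_distrib_left)
  also have "\<dots> = (\<Sum>k<N. if k = tone i t then ?X k * of_nat N else 0)"
  proof (rule sum.cong[OF refl])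
    fix k assume "k \<in> {..<N}"
    then have "N dvd cfr_g N \<pi> i k + t \<longleftrightarrow> k = tone i t"
      using cong_add_eq_0_iff_neg_mod[OF N_pos cfr_g_less[of \<pi> i, OF bij]]
        cfr_g_eq_iff[of \<pi> i, OF bij _ neg_mod_less[OF N_pos]]
      by (auto simp: tone_def cong_0_iff)
    then show "?X k * (\<Sum>r<N. omega N ^ (r * (cfr_g N \<pi> i k + t)))
        = (if k = tone i t then ?X k * of_nat N else 0)"
      by (simp add: sum_omega_pow_mult[OF N_pos])
  qed
  also have "\<dots> = ?X (tone i t) * of_nat N"
    using tone_less[OF bij] by simp
  finally show ?thesis
    by (simp add: mult_ac)
qed

lemma useq_closed_form:
  assumes "bij_betw (\<pi> i) {..<N} {..<N}"
  shows "U i c t = H c (tone i t) * omega L ^ (l (tone i t) * t)"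
proof -
  have "U i c t = complex_of_real (1 / sqrt (real L) * (sqrt (real P / real N) * real N))
      * (H c (tone i t) * omega L ^ (l (tone i t) * t))"
    by (simp add: useq_def sum_uhat_omega_pow[OF assms] mult_ac)
  then show ?thesis
    by (simp only: useq_scaling mult_1 of_real_1)
qed

lemma useq_mod: "U i c (t mod L) = U i c t"
proof -
  have "omega L ^ (n * (t mod L)) = omega L ^ (n * t)" for n
    by (metis mod_mult_right_eq omega_pow_mod)
  then show ?thesis
    by (simp add: useq_def)
qed

lemma tone_mult_add: "tone i (a * N + b) = tone i b"
  by (simp add: tone_def neg_mod_def)

lemma useq_mult_add:
  assumes "bij_betw (\<pi> i) {..<N} {..<N}"
  shows "U i c (a * N + b)
    = H c (tone i b) * (omega P ^ (a * l (tone i b)) * omega L ^ (l (tone i b) * b))"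
proof -
  have "omega L ^ (m * (a * N + b)) = omega P ^ (a * m) * omega L ^ (m * b)" for m
    using omega_pow_mult_add[of L P N a b m] N_pos by (simp add: mult_ac)
  then show ?thesis
    by (simp only: useq_closed_form[OF assms] tone_mult_add)
qed

lemma pcorr_useq:
  assumes bij: "bij_betw (\<pi> i) {..<N} {..<N}" "bij_betw (\<pi> i') {..<N} {..<N}"
  shows "pcorr L (U i c) (U i' c') \<tau> = of_nat P * (\<Sum>b<N.
    if tone i b = tone i' (b + \<tau>)
    then H c (tone i b) * cnj (H c' (tone i b)) * cnj (omega L ^ (l (tone i b) * \<tau>))
    else 0)"
proof -
  let ?x = "\<lambda>b. l (tone i b)" and ?y = "\<lambda>b. l (tone i' (b + \<tau>))"
  let ?C = "\<lambda>b. H c (tone i b) * cnj (H c' (tone i' (b + \<tau>)))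
    * (omega L ^ (?x b * b) * cnj (omega L ^ (?y b * (b + \<tau>))))"
  have "pcorr L (U i c) (U i' c') \<tau> = (\<Sum>t<P * N. U i c t * cnj (U i' c' (t + \<tau>)))"
    unfolding pcorr_periodic[of "U i' c'", OF useq_mod] by (simp only: mult.commute[of N])
  also have "\<dots> = (\<Sum>a<P. \<Sum>b<N. ?C b * (omega P ^ (a * ?x b) * cnj (omega P ^ (a * ?y b))))"
    unfolding sum_lessThan_mult add.assoc useq_mult_add[OF bij(1)] useq_mult_add[OF bij(2)]
      complex_cnj_mult
    by (simp only: mult_ac)
  also have "\<dots> = (\<Sum>b<N. ?C b * (if [?x b = ?y b] (mod P) then of_nat P else 0))"
    using N_pos by (subst sum.swap)
      (simp only: sum_distrib_left[symmetric] sum_omega_pow_mult_cnj[of P] add_pos_nonneg zero_le)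
  also have "\<dots> = of_nat P * (\<Sum>b<N.
    if tone i b = tone i' (b + \<tau>)
    then H c (tone i b) * cnj (H c' (tone i b)) * cnj (omega L ^ (l (tone i b) * \<tau>))
    else 0)"
  proof -
    have cong_iff: "[?x b = ?y b] (mod P) \<longleftrightarrow> tone i b = tone i' (b + \<tau>)" for b
      using cong_lpos_iff tone_less[OF bij(1)] tone_less[OF bij(2)] by blast
    have "?C b * (if [?x b = ?y b] (mod P) then of_nat P else 0) = of_nat P * (
        if tone i b = tone i' (b + \<tau>)
        then H c (tone i b) * cnj (H c' (tone i b)) * cnj (omega L ^ (l (tone i b) * \<tau>))
        else 0)" for b
    proof (cases "tone i b = tone i' (b + \<tau>)")
      case True
      have "?C b = H c (tone i b) * cnj (H c' (tone i b)) * cnj (omega L ^ (l (tone i b) * \<tau>))"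
        by (simp only: True add_mult_distrib2 omega_pow_mult_cnj_add)
      then show ?thesis
        using True cong_iff[of b] by (simp add: mult.commute)
    next
      case False
      then show ?thesis
        using cong_iff[of b] by simp
    qed
    then show ?thesis
      by (simp add: sum_distrib_left)
  qed
  finally show ?thesis .
qed

lemma norm_useq:
  assumes "bij_betw (\<pi> i) {..<N} {..<N}" and "\<forall>c<N. \<forall>s<N. norm (H c s) = 1" and "c < N"
  shows "norm (U i c t) = 1"
  using assms tone_less by (simp add: useq_closed_form norm_mult)

abbreviation "\<Omega> \<equiv> {s + a * P | s a. s \<in> I \<and> a < N}"

lemma mem_Omega_iff: "n < L \<Longrightarrow> n \<in> \<Omega> \<longleftrightarrow> n mod P \<in> I"
proof
  assume "n \<in> \<Omega>"
  then show "n mod P \<in> I"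
    using I_subset by auto
next
  assume "n < L" and "n mod P \<in> I"
  moreover have "n div P < N"
    using \<open>n < L\<close> by (rule less_mult_imp_div_less)
  moreover have "n = n mod P + n div P * P"
    by (rule mod_div_mult_eq[symmetric])
  ultimately show "n \<in> \<Omega>"
    by blast
qed

lemma uhat_Omega: "n \<in> \<Omega> \<Longrightarrow> uhat N T I H \<pi> i c n = 0"
  using I_subset by (auto simp: uhat_def dent_def)

lemma norm_uhat_not_Omega:
  assumes "n < L" and "n \<notin> \<Omega>" and "\<forall>c<N. \<forall>s<N. norm (H c s) = 1" and "c < N"
  shows "norm (uhat N T I H \<pi> i c n) = sqrt (real P / real N)"
proof -
  have "n mod P \<notin> I"
    using assms(1,2) mem_Omega_iff by blast
  then have "n mod P \<in> {..<P} - I"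
    using N_pos by simp
  then obtain t where "t < N" and "n mod P = l t"
    using bij_betw_lpos by (metis bij_betw_def imageE lessThan_iff)
  then show ?thesis
    using assms(3,4) by (simp add: uhat_def dent_lpos norm_mult)
qed

lemma card_Omega: "card \<Omega> = N * T"
proof -
  have "\<Omega> = (\<lambda>(s, a). s + a * P) ` (I \<times> {..<N})"
    by auto
  moreover have "inj_on (\<lambda>(s, a). s + a * P) (I \<times> {..<N})"
  proof (rule inj_onI, clarify)
    fix s a s' a' assume "s \<in> I" "s' \<in> I" and eq: "s + a * P = s' + a' * P"
    then have "s < P" "s' < P"
      using I_subset by auto
    then have "s = s'"
      using arg_cong[OF eq, of "\<lambda>n. n mod P"] by simp
    then show "s = s' \<and> a = a'"
      using eq N_pos by simp
  qed
  ultimately show ?thesis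
    using card_I I_subset by (simp add: card_image card_cartesian_product finite_subset)
qed

lemma bij_betw_tone: "bij_betw (\<pi> i) {..<N} {..<N} \<Longrightarrow> bij_betw (tone i) {..<N} {..<N}"
  unfolding tone_def using bij_betw_trans[OF bij_betw_neg_mod[OF N_pos]] by (simp add: comp_def)

lemma tone_add_neq:
  assumes "bij_betw (\<pi> i) {..<N} {..<N}" and "0 < \<tau>" "\<tau> < N"
  shows "tone i b \<noteq> tone i (b + \<tau>)"
proof
  assume "tone i b = tone i (b + \<tau>)"
  then have "neg_mod N b = neg_mod N (b + \<tau>)"
    using assms(1) neg_mod_less[OF N_pos] by (auto simp: tone_def bij_betw_def inj_on_def)
  then have "[b + 0 = b + \<tau>] (mod N)"
    by (simp add: neg_mod_eq_iff[OF N_pos])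
  then show False
    using assms(2,3) by (simp only: cong_add_lcancel_nat) (simp add: cong_def)
qed

lemma is_ZCZ_useq:
  assumes bij: "bij_betw (\<pi> i) {..<N} {..<N}"
    and orth: "\<forall>c0<N. \<forall>c1<N. c0 \<noteq> c1 \<longrightarrow> (\<Sum>s<N. H c0 s * cnj (H c1 s)) = 0"
  shows "is_ZCZ N L N (U i)"
  unfolding is_ZCZ_def
proof (intro conjI allI impI)
  fix c \<tau> assume "c < N" "0 < \<tau> \<and> \<tau> < N"
  then show "pcorr L (U i c) (U i c) \<tau> = 0"
    using tone_add_neq[OF bij] by (simp add: pcorr_useq[OF bij bij])
next
  fix c0 c1 \<tau> assume c: "c0 < N" "c1 < N" "c0 \<noteq> c1" and "\<tau> < N"
  show "pcorr L (U i c0) (U i c1) \<tau> = 0"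
  proof (cases "\<tau> = 0")
    case True
    have "(\<Sum>b<N. H c0 (tone i b) * cnj (H c1 (tone i b))) = (\<Sum>s<N. H c0 s * cnj (H c1 s))"
      using sum.reindex_bij_betw[OF bij_betw_tone[OF bij]] .
    then show ?thesis
      using True orth c by (simp add: pcorr_useq[OF bij bij])
  next
    case False
    then show ?thesis
      using tone_add_neq[OF bij] \<open>\<tau> < N\<close> by (simp add: pcorr_useq[OF bij bij])
  qed
qed

lemma norm_pcorr_useq_distinct_rows:
  assumes cfr: "is_CFR K N \<pi>" and rows: "i < K" "i' < K" "i \<noteq> i'"
    and unimodular: "\<forall>c<N. \<forall>s<N. norm (H c s) = 1" and "c0 < N" "c1 < N"
  shows "norm (pcorr L (U i c0) (U i' c1) \<tau>) = real P"
proof -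
  have bij: "bij_betw (\<pi> i) {..<N} {..<N}" "bij_betw (\<pi> i') {..<N} {..<N}"
    using cfr rows by (simp_all add: is_CFR_row_bij)
  obtain b0 where "b0 < N" and unique: "\<forall>b<N. tone i b = tone i' (b + \<tau>) \<longleftrightarrow> b = b0"
    using is_CFR_unique_coincidence[OF cfr rows N_pos] by (auto simp: tone_def)
  then have "pcorr L (U i c0) (U i' c1) \<tau> = of_nat P
      * (H c0 (tone i b0) * cnj (H c1 (tone i b0)) * cnj (omega L ^ (l (tone i b0) * \<tau>)))"
    by (simp add: pcorr_useq[OF bij] if_distrib cong: if_cong)
  moreover have "norm (H c0 (tone i b0)) = 1" "norm (H c1 (tone i b0)) = 1"
    using unimodular \<open>c0 < N\<close> \<open>c1 < N\<close> tone_less[OF bij(1)] by simp_all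
  ultimately show ?thesis
    by (simp only: norm_mult norm_of_nat complex_mod_cnj norm_omega_pow mult_1_right)
qed

end

theorem theorem7:
  fixes N T K :: nat and \<pi> :: "nat \<Rightarrow> nat \<Rightarrow> nat" and I :: "nat set"
    and H :: "nat \<Rightarrow> nat \<Rightarrow> complex"
  assumes N3: "N \<ge> 3" and Nodd: "odd N"
    and K_def: "K = Ftilde N"
    and CFR: "is_CFR K N \<pi>"
    and T1: "T \<ge> 1"
    and I_sub: "I \<subseteq> {..<N + T}" and I_card: "card I = T"
    and H_unim: "\<forall>c<N. \<forall>s<N. norm (H c s) = 1"
    and H_orth: "\<forall>c0<N. \<forall>c1<N. c0 \<noteq> c1 \<longrightarrow> (\<Sum>s<N. H c0 s * cnj (H c1 s)) = 0"
  shows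
    "(\<forall>i<K. \<forall>c<N. \<forall>t<N * (N + T). norm (useq N T I H \<pi> i c t) = 1)
     \<and> (\<forall>i<K. \<forall>c<N. \<forall>n<N * (N + T).
          (n \<in> {s + a * (N + T) | s a. s \<in> I \<and> a < N} \<longrightarrow> uhat N T I H \<pi> i c n = 0) \<and>
          (n \<notin> {s + a * (N + T) | s a. s \<in> I \<and> a < N} \<longrightarrow>
             norm (uhat N T I H \<pi> i c n) = sqrt (real (N + T) / real N)))
     \<and> (\<forall>i<K. is_ZCZ N (N * (N + T)) N (useq N T I H \<pi> i))
     \<and> N * (N + T) - card {s + a * (N + T) | s a. s \<in> I \<and> a < N} = N ^ 2
     \<and> (\<forall>i<K. \<forall>i'<K. i \<noteq> i' \<longrightarrow> (\<forall>c0<N. \<forall>c1<N. \<forall>\<tau><N * (N + T).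
          norm (pcorr (N * (N + T)) (useq N T I H \<pi> i c0) (useq N T I H \<pi> i' c1) \<tau>)
            = real (N + T)
          \<and> real (N + T) = real (N * (N + T))
              / sqrt (real (N * (N + T) - card {s + a * (N + T) | s a. s \<in> I \<and> a < N}))))"
proof -
  interpret zcz_construction N T I H \<pi>
    using N3 I_sub I_card by unfold_locales auto
  have bij: "bij_betw (\<pi> i) {..<N} {..<N}" if "i < K" for i
    using CFR that by (rule is_CFR_row_bij)
  have card: "N * (N + T) - card \<Omega> = N ^ 2"
    unfolding card_Omega by (simp add: power2_eq_square algebra_simps)
  have "real (N + T) = real (N * (N + T)) / sqrt (real (N ^ 2))"
    using N3 by simp
  then show ?thesis
    unfolding card
    using norm_useq[OF bij H_unim] uhat_Omega norm_uhat_not_Omega[OF _ _ H_unim]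
      is_ZCZ_useq[OF bij H_orth] norm_pcorr_useq_distinct_rows[OF CFR _ _ _ H_unim]
    by auto
qed

end
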